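(* For $n\ge0$ let $V_\Delta(n)=V_3(\alpha(n))$, where $\alpha(n)=x_1x_2x_1x_2\cdots\in\mathcal{B}_3$ is the alternating product of $n$ factors starting with $x_1$ ($\alpha(0)=1$). Then $V_\Delta(2k+1)=(s^3-s)V_\Delta(2k)+s^4V_\Delta(2k-1)$ for $k\ge1$; $V_\Delta(6k+4)=(s^3-s)V_\Delta(6k+3)+s^4V_\Delta(6k+2)$ for $k\ge0$; $V_\Delta(6k+2)=(s^3-s)V_\Delta(6k+1)+(s^7-s^5)V_\Delta(6k-1)+s^8V_\Delta(6k-2)$ for $k\ge1$; $V_\Delta(6k)=(s^3-s)\big[V_\Delta(6k-1)+s^4V_\Delta(6k-3)+s^8V_\Delta(6k-5)\big]+s^{12}V_\Delta(6k-6)$ for $k\ge1$.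
   Context: $\mathcal{B}_3$ is the 3-strand braid group with Artin generators $x_1,x_2$; $V_3(\beta)$ is the Jones polynomial of the closure of $\beta$, normalized by $V(\text{unknot})=1$ and $q^{-1}V_{L_+}-qV_{L_-}=(q^{1/2}-q^{-1/2})V_{L_0}$, written in $s=q^{-1/2}$. Conventions: closures of $\alpha x_i^{e+2}\gamma$, $\alpha x_i^{e+1}\gamma$, $\alpha x_i^{e}\gamma$ play the roles of $L_-,L_0,L_+$ (e.g. the closure of $x_1^2\in\mathcal B_2$ has Jones polynomial $-s-s^5$). *)

theory Defs
  imports "HOL-Computational_Algebra.Formal_Laurent_Series"
begin

text \<open>Artin generators of the 3-strand braid group; a braid word is a list of
  letters (generator, exponent sign), True meaning exponent +1, False meaning -1.\<close>

datatype brd_gen = X1 | X2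

type_synonym brd_word = "(brd_gen \<times> bool) list"

fun gpos :: "brd_gen \<Rightarrow> nat" where
  "gpos X1 = 1" | "gpos X2 = 2"

text \<open>Closed-braid diagram of a word after choosing, at each crossing, either the
  vertical smoothing (state False) or the horizontal cup-cap smoothing (state True).\<close>

definition brd_vertices :: "brd_word \<Rightarrow> (nat \<times> nat) set" where
  "brd_vertices w = {0..length w} \<times> {1,2,3}"

definition brd_edges :: "brd_word \<Rightarrow> bool list \<Rightarrow> ((nat \<times> nat) \<times> (nat \<times> nat)) set" where
  "brd_edges w st =
     {((j,p),(Suc j,p)) | j p. j < length w \<and> p \<in> {1,2,3} \<and>
         \<not> (st ! j \<and> p \<in> {gpos (fst (w ! j)), Suc (gpos (fst (w ! j)))})}
   \<union> {((j,i),(j,Suc i)) | j i. j < length w \<and> st ! j \<and> i = gpos (fst (w ! j))}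
   \<union> {((Suc j,i),(Suc j,Suc i)) | j i. j < length w \<and> st ! j \<and> i = gpos (fst (w ! j))}
   \<union> {((length w,p),(0,p)) | p. p \<in> {1,2,3}}"

definition brd_loops :: "brd_word \<Rightarrow> bool list \<Rightarrow> nat" where
  "brd_loops w st = card (brd_vertices w // ((brd_edges w st \<union> (brd_edges w st)\<inverse>)\<^sup>*))"

text \<open>Kauffman-bracket state sum, already multiplied by the writhe normalisation
  and rewritten in s = A^2 = q^(-1/2) (so that the closure of x_1^2 in B_2 has
  Jones polynomial -s - s^5, as in the stated conventions).  A letter x_i
  contributes -s (vertical) / -s^2 (cup-cap); x_i^(-1) contributes
  -s^(-1) / -s^(-2); every loop beyond the first contributes -(s + s^(-1)).\<close>

definition brd_coef :: "brd_gen \<times> bool \<Rightarrow> bool \<Rightarrow> int fls" where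
  "brd_coef l e =
     (if snd l then (if e then - (fls_X ^ 2) else - fls_X)
      else (if e then - (fls_X_inv ^ 2) else - fls_X_inv))"

definition loop_val :: "int fls" where
  "loop_val = - (fls_X + fls_X_inv)"

text \<open>Jones polynomial V_3 of the closure of a 3-braid word, as a Laurent
  polynomial in s = q^(-1/2) (s is fls_X).\<close>
definition V3 :: "brd_word \<Rightarrow> int fls" where
  "V3 w = (\<Sum>st \<in> {st :: bool list. length st = length w}.
            (\<Prod>j < length w. brd_coef (w ! j) (st ! j)) * loop_val ^ (brd_loops w st - 1))"

definition alpha :: "nat \<Rightarrow> brd_word" where
  "alpha n = map (\<lambda>j. (if even j then X1 else X2, True)) [0..<n]"

definition V_Delta :: "nat \<Rightarrow> int fls" where
  "V_Delta n = V3 (alpha n)"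

end

theory Submission
  imports Defs
begin

text \<open>Smoothing every crossing of a 3-braid either vertically or by a cup-cap turns the braid
  into a product of Temperley--Lieb generators e1, e2, so the number of loops of a state is
  the number of loops closed off while multiplying these out in the five-element basis
  1, e1, e2, e1 e2, e2 e1, plus the loops of the closure of the final basis diagram.
  Closing the braid by an arbitrary basis diagram X instead of 1 makes the state sum satisfy
  a linear recursion in the length of the word: the last crossing either is smoothed
  vertically or contributes a factor e_g, which is moved into X.  Along the alternating
  words alpha(n) this recursion has explicit solutions, polynomial in s, s^(-1) and
  A = s^(6 j) for n = 6 j + r, and the four recurrences are polynomial identities between
  them.\<close>

section \<open>Connected components under added edges\<close>

lemma rtrancl_insert_sym_pair:
  assumes "sym S"
  shows "(S \<union> {(a,b),(b,a)})\<^sup>* =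
    {(x,y). (x,y) \<in> S\<^sup>* \<or> ((x,a) \<in> S\<^sup>* \<and> (b,y) \<in> S\<^sup>*) \<or> ((x,b) \<in> S\<^sup>* \<and> (a,y) \<in> S\<^sup>*)}"
proof -
  have "sym (S\<^sup>*)" using assms by (simp add: sym_rtrancl)
  moreover have "S \<union> {(a,b),(b,a)} = insert (a,b) (insert (b,a) S)" by auto
  ultimately show ?thesis
    by (simp only: rtrancl_insert) (auto simp: sym_def intro: rtrancl_trans)
qed

lemma rtrancl_outside_vertices:
  assumes "S \<subseteq> V \<times> V" "x \<notin> V"
  shows "(x,y) \<in> S\<^sup>* \<longleftrightarrow> x = y" and "(y,x) \<in> S\<^sup>* \<longleftrightarrow> x = y"
proof -
  show "(x,y) \<in> S\<^sup>* \<longleftrightarrow> x = y"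
  proof
    assume "(x,y) \<in> S\<^sup>*" then show "x = y"
      by (cases rule: converse_rtranclE) (use assms in auto)
  qed auto
  show "(y,x) \<in> S\<^sup>* \<longleftrightarrow> x = y"
  proof
    assume "(y,x) \<in> S\<^sup>*" then show "x = y"
      by (cases rule: rtranclE) (use assms in auto)
  qed auto
qed

lemma card_quotient_insert_isolated:
  assumes "finite V" "S \<subseteq> V \<times> V" "v \<notin> V"
  shows "card (insert v V // S\<^sup>*) = Suc (card (V // S\<^sup>*))"
proof -
  have "S\<^sup>* `` {v} = {v}" using rtrancl_outside_vertices[OF assms(2,3)] by auto
  then have split: "insert v V // S\<^sup>* = insert {v} (V // S\<^sup>*)"
    unfolding quotient_def by auto
  have "{v} \<notin> V // S\<^sup>*"
    using assms(3) unfolding quotient_def by auto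
  moreover have "finite (V // S\<^sup>*)" using assms(1) unfolding quotient_def by auto
  ultimately show ?thesis unfolding split by simp
qed

lemma quotient_add_edge:
  assumes "sym S" "a \<in> V" "b \<in> V"
  shows "V // (S \<union> {(a,b),(b,a)})\<^sup>* =
    insert (S\<^sup>* `` {a} \<union> S\<^sup>* `` {b}) (V // S\<^sup>* - {S\<^sup>* `` {a}, S\<^sup>* `` {b}})"
proof -
  let ?R = "S\<^sup>*"
  have eq: "equiv UNIV ?R"
    using assms(1) by (simp add: equiv_def refl_rtrancl sym_rtrancl trans_rtrancl)
  have closure_class: "(S \<union> {(a,b),(b,a)})\<^sup>* `` {x} =
      (if (x,a) \<in> ?R \<or> (x,b) \<in> ?R then ?R `` {a} \<union> ?R `` {b} else ?R `` {x})" for x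
    using eq unfolding rtrancl_insert_sym_pair[OF assms(1)]
    by (auto simp: equiv_def sym_def dest: transD)
  have merged: "?R `` {x} \<in> {?R `` {a}, ?R `` {b}} \<longleftrightarrow> (x,a) \<in> ?R \<or> (x,b) \<in> ?R" for x
    using eq_equiv_class_iff[OF eq] by auto
  show ?thesis
  proof (rule set_eqI, rule iffI)
    fix C assume "C \<in> V // (S \<union> {(a,b),(b,a)})\<^sup>*"
    then obtain x where "x \<in> V" "C = (S \<union> {(a,b),(b,a)})\<^sup>* `` {x}"
      unfolding quotient_def by auto
    then show "C \<in> insert (?R `` {a} \<union> ?R `` {b}) (V // ?R - {?R `` {a}, ?R `` {b}})"
      using closure_class[of x] merged[of x] unfolding quotient_def by (auto split: if_splits)
  next
    fix C assume C: "C \<in> insert (?R `` {a} \<union> ?R `` {b}) (V // ?R - {?R `` {a}, ?R `` {b}})"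
    show "C \<in> V // (S \<union> {(a,b),(b,a)})\<^sup>*"
    proof (cases "C = ?R `` {a} \<union> ?R `` {b}")
      case True
      then show ?thesis using closure_class[of a] assms(2) unfolding quotient_def by auto
    next
      case False
      with C obtain x where "x \<in> V" "C = ?R `` {x}" "?R `` {x} \<notin> {?R `` {a}, ?R `` {b}}"
        unfolding quotient_def by auto
      then show ?thesis using closure_class[of x] merged[of x] unfolding quotient_def by auto
    qed
  qed
qed

lemma card_quotient_add_edge:
  assumes "finite V" "sym S" "a \<in> V" "b \<in> V" "(a,b) \<notin> S\<^sup>*"
  shows "card (V // S\<^sup>*) = Suc (card (V // (S \<union> {(a,b),(b,a)})\<^sup>*))"
proof -
  let ?R = "S\<^sup>*" and ?A = "S\<^sup>* `` {a}" and ?B = "S\<^sup>* `` {b}"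
  let ?rest = "V // ?R - {?A, ?B}"
  have eq: "equiv UNIV ?R"
    using assms(2) by (simp add: equiv_def refl_rtrancl sym_rtrancl trans_rtrancl)
  have fin: "finite ?rest" using assms(1) unfolding quotient_def by auto
  have "V // ?R = insert ?A (insert ?B ?rest)"
    using assms(3,4) unfolding quotient_def by auto
  then have "card (V // ?R) = card (insert ?A (insert ?B ?rest))" by (rule arg_cong)
  also have "\<dots> = Suc (Suc (card ?rest))"
    using fin eq_equiv_class_iff[OF eq] assms(5) by auto
  finally have before: "card (V // ?R) = Suc (Suc (card ?rest))" .
  have "?A \<union> ?B \<notin> ?rest"
  proof
    assume "?A \<union> ?B \<in> ?rest"
    then obtain x where "?A \<union> ?B = ?R `` {x}" "?R `` {x} \<noteq> ?A" unfolding quotient_def by auto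
    moreover from this have "(x,a) \<in> ?R" by auto
    ultimately show False using eq_equiv_class_iff[OF eq] by auto
  qed
  then have "card (V // (S \<union> {(a,b),(b,a)})\<^sup>*) = Suc (card ?rest)"
    unfolding quotient_add_edge[OF assms(2-4)] using fin by simp
  with before show ?thesis by simp
qed

definition represents :: "'v set \<Rightarrow> ('v \<times> 'v) set \<Rightarrow> ('v \<Rightarrow> 'l) \<Rightarrow> bool" where
  "represents P R L \<longleftrightarrow> (\<forall>x\<in>P. \<forall>y\<in>P. (x,y) \<in> R \<longleftrightarrow> L x = L y)"

text \<open>Union--find on labels: the second component counts the edges that join two
  different classes.\<close>

fun merge_labels :: "('v \<times> 'v) list \<Rightarrow> ('v \<Rightarrow> 'l) \<Rightarrow> ('v \<Rightarrow> 'l) \<times> nat" where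
  "merge_labels [] L = (L, 0)"
| "merge_labels ((a,b) # es) L =
     (if L a = L b then merge_labels es L
      else apsnd Suc (merge_labels es (\<lambda>z. if L z = L b then L a else L z)))"

lemma merge_labels_correct:
  assumes "finite V" "sym S" "P \<subseteq> V" "set es \<subseteq> P \<times> P" "represents P (S\<^sup>*) L"
  shows "represents P ((S \<union> set es \<union> (set es)\<inverse>)\<^sup>*) (fst (merge_labels es L)) \<and>
    card (V // S\<^sup>*) = card (V // (S \<union> set es \<union> (set es)\<inverse>)\<^sup>*) + snd (merge_labels es L)"
  using assms(2,4,5)
proof (induction es arbitrary: S L)
  case Nil
  then show ?case by simp
next
  case (Cons e es)
  obtain a b where e: "e = (a,b)" by (cases e)
  define S' where "S' = S \<union> {(a,b),(b,a)}"
  have ab: "a \<in> P" "b \<in> P" using Cons.prems(2) e by auto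
  have S': "S \<union> set (e # es) \<union> (set (e # es))\<inverse> = S' \<union> set es \<union> (set es)\<inverse>"
    unfolding S'_def e by auto
  have sym: "sym S'" using Cons.prems(1) unfolding S'_def by (auto simp: sym_def)
  have es: "set es \<subseteq> P \<times> P" using Cons.prems(2) by auto
  note IH = Cons.IH[OF sym es]
  show ?case
  proof (cases "L a = L b")
    case True
    then have "(a,b) \<in> S\<^sup>*" using Cons.prems(3) ab unfolding represents_def by auto
    then have "S'\<^sup>* = S\<^sup>*"
      using sym_rtrancl[OF Cons.prems(1)] unfolding S'_def rtrancl_insert_sym_pair[OF Cons.prems(1)]
      by (auto simp: sym_def intro: rtrancl_trans) (meson rtrancl_trans)
    then show ?thesis using IH Cons.prems(3) True e S' by simp
  next
    case False
    define L' where "L' = (\<lambda>z. if L z = L b then L a else L z)"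
    have "(a,b) \<notin> S\<^sup>*" using Cons.prems(3) ab False unfolding represents_def by auto
    then have "card (V // S\<^sup>*) = Suc (card (V // S'\<^sup>*))"
      unfolding S'_def using assms(1,3) Cons.prems(1) ab by (intro card_quotient_add_edge) auto
    moreover have "represents P (S'\<^sup>*) L'"
    proof -
      have "(x,y) \<in> S'\<^sup>* \<longleftrightarrow> L x = L y \<or> (L x = L a \<and> L b = L y) \<or> (L x = L b \<and> L a = L y)"
        if "x \<in> P" "y \<in> P" for x y
        using that ab Cons.prems(3)
        unfolding represents_def S'_def rtrancl_insert_sym_pair[OF Cons.prems(1)] by simp
      then show ?thesis using False unfolding represents_def L'_def by auto
    qed
    ultimately show ?thesis using IH False e S' unfolding L'_def by simp
  qed
qed

section \<open>Temperley--Lieb diagrams on three strands\<close>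

datatype tl3 = TL_1 | TL_e1 | TL_e2 | TL_e1e2 | TL_e2e1

text \<open>The product D e_g, together with the number of loops it closes off.\<close>

fun tl_mul_gen :: "tl3 \<Rightarrow> brd_gen \<Rightarrow> tl3 \<times> nat" where
  "tl_mul_gen TL_1 X1 = (TL_e1, 0)"     | "tl_mul_gen TL_1 X2 = (TL_e2, 0)"
| "tl_mul_gen TL_e1 X1 = (TL_e1, 1)"    | "tl_mul_gen TL_e1 X2 = (TL_e1e2, 0)"
| "tl_mul_gen TL_e2 X1 = (TL_e2e1, 0)"  | "tl_mul_gen TL_e2 X2 = (TL_e2, 1)"
| "tl_mul_gen TL_e1e2 X1 = (TL_e1, 0)"  | "tl_mul_gen TL_e1e2 X2 = (TL_e1e2, 1)"
| "tl_mul_gen TL_e2e1 X1 = (TL_e2e1, 1)" | "tl_mul_gen TL_e2e1 X2 = (TL_e2, 0)"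

fun tl_closure_loops :: "tl3 \<Rightarrow> nat" where
  "tl_closure_loops TL_1 = 3" | "tl_closure_loops TL_e1 = 2" | "tl_closure_loops TL_e2 = 2"
| "tl_closure_loops TL_e1e2 = 1" | "tl_closure_loops TL_e2e1 = 1"

text \<open>Endpoints of a diagram are labelled so that two endpoints carry the same label iff an
  arc of the diagram joins them; top and bottom labels share one range, so that a strand
  running through the diagram is visible.\<close>

fun tl_top_labels :: "tl3 \<Rightarrow> nat \<times> nat \<times> nat" where
  "tl_top_labels TL_1 = (1,2,3)" | "tl_top_labels TL_e1 = (2,2,3)" | "tl_top_labels TL_e2 = (1,3,3)"
| "tl_top_labels TL_e1e2 = (3,2,2)" | "tl_top_labels TL_e2e1 = (1,1,3)"

fun tl_bottom_labels :: "tl3 \<Rightarrow> nat \<times> nat \<times> nat" where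
  "tl_bottom_labels TL_1 = (1,2,3)" | "tl_bottom_labels TL_e1 = (1,1,3)"
| "tl_bottom_labels TL_e2 = (1,2,2)" | "tl_bottom_labels TL_e1e2 = (1,1,3)"
| "tl_bottom_labels TL_e2e1 = (3,2,2)"

fun nth3 :: "nat \<times> nat \<times> nat \<Rightarrow> nat \<Rightarrow> nat" where
  "nth3 (a,b,c) p = (if p = 1 then a else if p = 2 then b else c)"

definition boundary_label :: "tl3 \<Rightarrow> nat \<Rightarrow> nat \<times> nat \<Rightarrow> nat" where
  "boundary_label D n x =
     (if fst x = n then nth3 (tl_top_labels D) (snd x) else nth3 (tl_bottom_labels D) (snd x))"

section \<open>Loops of a smoothed closed 3-braid\<close>

type_synonym edge = "(nat \<times> nat) \<times> (nat \<times> nat)"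

fun free_strand :: "brd_gen \<Rightarrow> nat" where
  "free_strand X1 = 3" | "free_strand X2 = 1"

definition layer_edges :: "bool \<Rightarrow> brd_gen \<Rightarrow> nat \<Rightarrow> edge list" where
  "layer_edges b g j =
     (if b then [((j, gpos g), (j, Suc (gpos g))), ((Suc j, gpos g), (Suc j, Suc (gpos g))),
                 ((j, free_strand g), (Suc j, free_strand g))]
      else [((j,1),(Suc j,1)), ((j,2),(Suc j,2)), ((j,3),(Suc j,3))])"

definition closure_edges :: "nat \<Rightarrow> edge list" where
  "closure_edges n = [((n,1),(0,1)), ((n,2),(0,2)), ((n,3),(0,3))]"

definition partial_edges :: "brd_word \<Rightarrow> bool list \<Rightarrow> nat \<Rightarrow> edge set" where
  "partial_edges w st n = (\<Union>j<n. set (layer_edges (st ! j) (fst (w ! j)) j))"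

lemma brd_edges_layers:
  "brd_edges w st = partial_edges w st (length w) \<union> set (closure_edges (length w))"
proof -
  have layer: "{((j,p),(Suc j,p)) | p. p \<in> {1,2,3} \<and>
         \<not> (st ! j \<and> p \<in> {gpos (fst (w ! j)), Suc (gpos (fst (w ! j)))})}
      \<union> {((j,i),(j,Suc i)) | i. st ! j \<and> i = gpos (fst (w ! j))}
      \<union> {((Suc j,i),(Suc j,Suc i)) | i. st ! j \<and> i = gpos (fst (w ! j))}
    = set (layer_edges (st ! j) (fst (w ! j)) j)" for j
    by (cases "st ! j"; cases "fst (w ! j)") (auto simp: layer_edges_def numeral_eq_Suc)
  have pull: "{f j p | j p. j < N \<and> Q j p} = (\<Union>j<N. {f j p | p. Q j p})"
    for f :: "nat \<Rightarrow> nat \<Rightarrow> edge" and N Q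
    by blast
  have closure: "{((length w, p), 0, p) | p. p \<in> {1::nat, 2, 3}} = set (closure_edges (length w))"
    unfolding closure_edges_def by auto
  show ?thesis
    unfolding brd_edges_def pull partial_edges_def layer[symmetric] UN_Un_distrib closure ..
qed

definition tl_step :: "bool \<Rightarrow> brd_gen \<Rightarrow> tl3 \<Rightarrow> tl3 \<times> nat" where
  "tl_step b g D = (if b then tl_mul_gen D g else (D, 0))"

text \<open>The diagram of the first n layers of a state, reduced to a basis diagram, and the
  number of loops closed off on the way.\<close>

fun tl_state :: "brd_word \<Rightarrow> bool list \<Rightarrow> nat \<Rightarrow> tl3 \<times> nat" where
  "tl_state w st 0 = (TL_1, 0)"
| "tl_state w st (Suc n) =
     (fst (tl_step (st ! n) (fst (w ! n)) (fst (tl_state w st n))),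
      snd (tl_state w st n) + snd (tl_step (st ! n) (fst (w ! n)) (fst (tl_state w st n))))"

definition level_vertices :: "nat \<Rightarrow> (nat \<times> nat) set" where
  "level_vertices n = {0..n} \<times> {1,2,3}"

definition boundary :: "nat \<Rightarrow> (nat \<times> nat) set" where
  "boundary n = {(0,1),(0,2),(0,3),(n,1),(n,2),(n,3)}"

text \<open>Labels above 10 are fresh: boundary labels are at most 3.\<close>

definition extend_label :: "tl3 \<Rightarrow> nat \<Rightarrow> nat \<times> nat \<Rightarrow> nat" where
  "extend_label D n x = (if fst x = Suc n then 10 + snd x else boundary_label D n x)"

text \<open>At level 0 top and bottom coincide, so only the identity diagram is labelled
  consistently there; this is the role of the hypothesis on D.\<close>

lemma merge_layer:
  assumes "D \<noteq> TL_1 \<longrightarrow> n \<noteq> 0"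
  shows "(\<forall>x\<in>boundary (Suc n). \<forall>y\<in>boundary (Suc n).
      fst (merge_labels (layer_edges b g n) (extend_label D n)) x
        = fst (merge_labels (layer_edges b g n) (extend_label D n)) y \<longleftrightarrow>
      boundary_label (fst (tl_step b g D)) (Suc n) x = boundary_label (fst (tl_step b g D)) (Suc n) y)
    \<and> snd (merge_labels (layer_edges b g n) (extend_label D n)) + snd (tl_step b g D) = 3"
  using assms
  by (cases b; cases g; cases D; cases "n = 0")
     (simp_all add: layer_edges_def extend_label_def boundary_label_def boundary_def tl_step_def)

lemma merge_closure:
  "D \<noteq> TL_1 \<longrightarrow> n \<noteq> 0 \<Longrightarrow>
    snd (merge_labels (closure_edges n) (boundary_label D n)) + tl_closure_loops D = 3"
  by (cases D; cases "n = 0") (simp_all add: closure_edges_def boundary_label_def)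

lemma partial_edges_Suc:
  "partial_edges w st (Suc n) = partial_edges w st n \<union> set (layer_edges (st ! n) (fst (w ! n)) n)"
  unfolding partial_edges_def lessThan_Suc by auto

lemma partial_edges_subset: "partial_edges w st n \<subseteq> level_vertices n \<times> level_vertices n"
proof (induction n)
  case 0
  then show ?case by (simp add: partial_edges_def)
next
  case (Suc n)
  have "set (layer_edges b g n) \<subseteq> level_vertices (Suc n) \<times> level_vertices (Suc n)" for b g
    by (cases b; cases g) (auto simp: layer_edges_def level_vertices_def)
  moreover have "level_vertices n \<subseteq> level_vertices (Suc n)" by (auto simp: level_vertices_def)
  ultimately show ?case using Suc unfolding partial_edges_Suc by blast
qed

lemma card_quotient_next_level:
  assumes "S \<subseteq> level_vertices n \<times> level_vertices n"
  shows "card (level_vertices (Suc n) // S\<^sup>*) = card (level_vertices n // S\<^sup>*) + 3"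
proof -
  have fresh: "(Suc n, p) \<notin> level_vertices n" for p by (simp add: level_vertices_def)
  have "level_vertices (Suc n) =
      insert (Suc n, 1) (insert (Suc n, 2) (insert (Suc n, 3) (level_vertices n)))"
    by (auto simp: level_vertices_def)
  moreover have "card (insert v V // S\<^sup>*) = Suc (card (V // S\<^sup>*))"
    if "level_vertices n \<subseteq> V" "finite V" "v \<notin> V" for v V
    using card_quotient_insert_isolated[OF that(2) _ that(3)] assms that(1) by blast
  moreover have "finite (level_vertices n)" by (simp add: level_vertices_def)
  ultimately show ?thesis using fresh by (simp add: subset_insertI2)
qed

lemma represents_extend_label:
  assumes "S \<subseteq> level_vertices n \<times> level_vertices n"
    and "represents (boundary n) (S\<^sup>*) (boundary_label D n)"
  shows "represents (boundary n \<union> {(Suc n,1),(Suc n,2),(Suc n,3)}) (S\<^sup>*) (extend_label D n)"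
  unfolding represents_def
proof (intro ballI)
  fix x y assume xy: "x \<in> boundary n \<union> {(Suc n,1),(Suc n,2),(Suc n,3)}"
    "y \<in> boundary n \<union> {(Suc n,1),(Suc n,2),(Suc n,3)}"
  have small: "boundary_label D n z < 10" for z
    by (cases D) (auto simp: boundary_label_def)
  show "(x,y) \<in> S\<^sup>* \<longleftrightarrow> extend_label D n x = extend_label D n y"
  proof (cases "fst x = Suc n \<or> fst y = Suc n")
    case True
    then have "x \<notin> level_vertices n \<or> y \<notin> level_vertices n" by (auto simp: level_vertices_def)
    then have "(x,y) \<in> S\<^sup>* \<longleftrightarrow> x = y" by (metis rtrancl_outside_vertices[OF assms(1)])
    also have "\<dots> \<longleftrightarrow> extend_label D n x = extend_label D n y"
      using True xy small[of x] small[of y] unfolding boundary_def extend_label_def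
      by (auto simp: prod_eq_iff)
    finally show ?thesis .
  next
    case False
    then have "x \<in> boundary n" "y \<in> boundary n" using xy by auto
    then show ?thesis using assms(2) False unfolding represents_def extend_label_def by auto
  qed
qed

lemma tl_state_invariant:
  fixes w :: brd_word and st :: "bool list" and n :: nat
  defines "S \<equiv> \<lambda>n. partial_edges w st n \<union> (partial_edges w st n)\<inverse>"
  shows "card (level_vertices n // (S n)\<^sup>*) = snd (tl_state w st n) + 3 \<and>
    represents (boundary n) ((S n)\<^sup>*) (boundary_label (fst (tl_state w st n)) n) \<and>
    (fst (tl_state w st n) \<noteq> TL_1 \<longrightarrow> n \<noteq> 0)"
proof (induction n)
  case 0
  have "level_vertices 0 // Id = (\<lambda>x. {x}) ` level_vertices 0" unfolding quotient_def by auto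
  then have "card (level_vertices 0 // Id) = 3" by (simp add: level_vertices_def card_image)
  moreover have "represents (boundary 0) Id (boundary_label TL_1 0)"
    by (auto simp: represents_def boundary_def boundary_label_def)
  ultimately show ?case by (simp add: S_def partial_edges_def)
next
  case (Suc n)
  define D where "D = fst (tl_state w st n)"
  define es where "es = layer_edges (st ! n) (fst (w ! n)) n"
  define P where "P = boundary n \<union> {(Suc n,1),(Suc n,2),(Suc n,3)}"
  have IH: "card (level_vertices n // (S n)\<^sup>*) = snd (tl_state w st n) + 3"
    "represents (boundary n) ((S n)\<^sup>*) (boundary_label D n)" "D \<noteq> TL_1 \<longrightarrow> n \<noteq> 0"
    using Suc.IH unfolding D_def by auto
  have S_sub: "S n \<subseteq> level_vertices n \<times> level_vertices n"
    using partial_edges_subset unfolding S_def by blast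
  have es_sub: "set es \<subseteq> P \<times> P" unfolding es_def P_def boundary_def
    by (cases "st ! n"; cases "fst (w ! n)") (auto simp: layer_edges_def)
  have P_sub: "P \<subseteq> level_vertices (Suc n)"
    unfolding P_def boundary_def level_vertices_def by auto
  have "sym (S n)" unfolding S_def by (auto simp: sym_def)
  moreover have "finite (level_vertices (Suc n))" by (simp add: level_vertices_def)
  moreover have "represents P ((S n)\<^sup>*) (extend_label D n)"
    unfolding P_def by (rule represents_extend_label[OF S_sub IH(2)])
  ultimately have merged:
    "represents P ((S n \<union> set es \<union> (set es)\<inverse>)\<^sup>*) (fst (merge_labels es (extend_label D n)))"
    "card (level_vertices (Suc n) // (S n)\<^sup>*) =
       card (level_vertices (Suc n) // (S n \<union> set es \<union> (set es)\<inverse>)\<^sup>*)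
       + snd (merge_labels es (extend_label D n))"
    using merge_labels_correct[OF _ _ P_sub es_sub] by blast+
  have S_Suc: "S (Suc n) = S n \<union> set es \<union> (set es)\<inverse>"
    unfolding S_def es_def partial_edges_Suc by auto
  have state: "tl_state w st (Suc n) = (fst (tl_step (st ! n) (fst (w ! n)) D),
      snd (tl_state w st n) + snd (tl_step (st ! n) (fst (w ! n)) D))"
    unfolding D_def by (rule tl_state.simps(2))
  note layer = merge_layer[OF IH(3), of "st ! n" "fst (w ! n)", folded es_def]
  have "boundary (Suc n) \<subseteq> P" unfolding P_def boundary_def by auto
  then have "represents (boundary (Suc n)) ((S (Suc n))\<^sup>*)
      (boundary_label (fst (tl_state w st (Suc n))) (Suc n))"
    using merged(1) layer unfolding S_Suc state represents_def fst_conv by blast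
  moreover have "card (level_vertices (Suc n) // (S (Suc n))\<^sup>*) = snd (tl_state w st (Suc n)) + 3"
    using merged(2) layer card_quotient_next_level[OF S_sub] IH(1) unfolding S_Suc state by simp
  ultimately show ?case by simp
qed

lemma brd_loops_tl_state:
  "brd_loops w st = snd (tl_state w st (length w)) + tl_closure_loops (fst (tl_state w st (length w)))"
proof -
  let ?n = "length w" and ?D = "fst (tl_state w st (length w))"
  let ?S = "partial_edges w st ?n \<union> (partial_edges w st ?n)\<inverse>" and ?C = "closure_edges ?n"
  note inv = tl_state_invariant[where w = w and st = st and n = ?n]
  have "sym ?S" by (auto simp: sym_def)
  moreover have "finite (level_vertices ?n)" by (simp add: level_vertices_def)
  moreover have "boundary ?n \<subseteq> level_vertices ?n"
    unfolding boundary_def level_vertices_def by auto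
  moreover have "set ?C \<subseteq> boundary ?n \<times> boundary ?n"
    unfolding closure_edges_def boundary_def by auto
  ultimately have "card (level_vertices ?n // ?S\<^sup>*) =
      card (level_vertices ?n // (?S \<union> set ?C \<union> (set ?C)\<inverse>)\<^sup>*)
      + snd (merge_labels ?C (boundary_label ?D ?n))"
    using merge_labels_correct inv by blast
  moreover have "brd_edges w st \<union> (brd_edges w st)\<inverse> = ?S \<union> set ?C \<union> (set ?C)\<inverse>"
    unfolding brd_edges_layers by auto
  then have "brd_loops w st = card (level_vertices ?n // (?S \<union> set ?C \<union> (set ?C)\<inverse>)\<^sup>*)"
    unfolding brd_loops_def brd_vertices_def level_vertices_def by simp
  ultimately show ?thesis using inv merge_closure[of ?D ?n] by simp
qed

section \<open>State sums closed by a diagram\<close>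

fun tl_word :: "tl3 \<Rightarrow> brd_gen list" where
  "tl_word TL_1 = []" | "tl_word TL_e1 = [X1]" | "tl_word TL_e2 = [X2]"
| "tl_word TL_e1e2 = [X1, X2]" | "tl_word TL_e2e1 = [X2, X1]"

fun tl_mul_word :: "tl3 \<Rightarrow> brd_gen list \<Rightarrow> tl3 \<times> nat" where
  "tl_mul_word D [] = (D, 0)"
| "tl_mul_word D (g # gs) =
     (fst (tl_mul_word (fst (tl_mul_gen D g)) gs),
      snd (tl_mul_gen D g) + snd (tl_mul_word (fst (tl_mul_gen D g)) gs))"

text \<open>The number of loops beyond the first in the closure of D X.\<close>

definition closure_extra_loops :: "tl3 \<Rightarrow> tl3 \<Rightarrow> nat" where
  "closure_extra_loops D X =
     snd (tl_mul_word D (tl_word X)) + tl_closure_loops (fst (tl_mul_word D (tl_word X))) - 1"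

fun tl_gen :: "brd_gen \<Rightarrow> tl3" where
  "tl_gen X1 = TL_e1" | "tl_gen X2 = TL_e2"

definition tl_gen_mul :: "brd_gen \<Rightarrow> tl3 \<Rightarrow> tl3 \<times> nat" where
  "tl_gen_mul g X = tl_mul_word (tl_gen g) (tl_word X)"

text \<open>Associativity (D e_g) X = D (e_g X), counting loops.\<close>

lemma tl_mul_gen_extra_loops:
  "snd (tl_mul_gen D g) + closure_extra_loops (fst (tl_mul_gen D g)) X =
   snd (tl_gen_mul g X) + closure_extra_loops D (fst (tl_gen_mul g X))"
  by (cases D; cases g; cases X) (simp_all add: closure_extra_loops_def tl_gen_mul_def)

text \<open>The Kauffman state sum of the closure of the first n letters of w multiplied by the
  diagram X.\<close>

definition closed_state_sum :: "brd_word \<Rightarrow> nat \<Rightarrow> tl3 \<Rightarrow> int fls" where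
  "closed_state_sum w n X = (\<Sum>st\<in>{st :: bool list. length st = n}.
     (\<Prod>j<n. brd_coef (w ! j) (st ! j)) *
     loop_val ^ (snd (tl_state w st n) + closure_extra_loops (fst (tl_state w st n)) X))"

lemma V3_closed_state_sum: "V3 w = closed_state_sum w (length w) TL_1"
  unfolding V3_def closed_state_sum_def
proof (rule sum.cong[OF refl])
  fix st
  have "tl_closure_loops D \<ge> 1" for D by (cases D) auto
  then have "brd_loops w st - 1 =
      snd (tl_state w st (length w)) + closure_extra_loops (fst (tl_state w st (length w))) TL_1"
    unfolding brd_loops_tl_state closure_extra_loops_def by (simp add: add_diff_assoc)
  then show "(\<Prod>j<length w. brd_coef (w ! j) (st ! j)) * loop_val ^ (brd_loops w st - 1) =
    (\<Prod>j<length w. brd_coef (w ! j) (st ! j)) * loop_val ^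
      (snd (tl_state w st (length w)) + closure_extra_loops (fst (tl_state w st (length w))) TL_1)"
    by simp
qed

lemma tl_state_cong:
  "(\<And>j. j < n \<Longrightarrow> st ! j = st' ! j) \<Longrightarrow> (\<And>j. j < n \<Longrightarrow> w ! j = w' ! j) \<Longrightarrow>
    tl_state w st n = tl_state w' st' n"
  by (induction n) (simp_all add: tl_state.simps(2))

lemma sum_bool_lists_Suc:
  "(\<Sum>st\<in>{st :: bool list. length st = Suc n}. f st) =
   (\<Sum>xs\<in>{xs. length xs = n}. f (xs @ [False]) + f (xs @ [True]))"
proof -
  let ?A = "{xs :: bool list. length xs = n}"
  have fin: "finite ?A" using finite_lists_length_eq[of "UNIV :: bool set" n] by simp
  have split: "{st :: bool list. length st = Suc n} = (\<lambda>xs. xs @ [False]) ` ?A \<union> (\<lambda>xs. xs @ [True]) ` ?A"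
  proof (rule set_eqI, rule iffI)
    fix st :: "bool list" assume "st \<in> {st. length st = Suc n}"
    then obtain y ys where "st = ys @ [y]" "length ys = n" by (auto simp: length_Suc_conv_rev)
    then show "st \<in> (\<lambda>xs. xs @ [False]) ` ?A \<union> (\<lambda>xs. xs @ [True]) ` ?A" by (cases y) auto
  qed auto
  have inj: "inj_on (\<lambda>xs. xs @ [b]) ?A" for b by (auto simp: inj_on_def)
  show ?thesis
    unfolding split
    by (subst sum.union_disjoint) (use fin in \<open>auto simp: sum.reindex[OF inj] sum.distrib\<close>)
qed

lemma closed_state_sum_Suc:
  "closed_state_sum w (Suc n) X =
     brd_coef (w ! n) False * closed_state_sum w n X +
     brd_coef (w ! n) True * loop_val ^ snd (tl_gen_mul (fst (w ! n)) X) *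
       closed_state_sum w n (fst (tl_gen_mul (fst (w ! n)) X))"
proof -
  define Y where "Y = fst (tl_gen_mul (fst (w ! n)) X)"
  define k where "k = snd (tl_gen_mul (fst (w ! n)) X)"
  define summand where "summand Z xs = (\<Prod>j<n. brd_coef (w ! j) (xs ! j)) *
      loop_val ^ (snd (tl_state w xs n) + closure_extra_loops (fst (tl_state w xs n)) Z)"
    for Z xs
  define summand' where "summand' st = (\<Prod>j<Suc n. brd_coef (w ! j) (st ! j)) *
      loop_val ^ (snd (tl_state w st (Suc n)) + closure_extra_loops (fst (tl_state w st (Suc n))) X)"
    for st
  have smoothings: "summand' (xs @ [False]) + summand' (xs @ [True]) =
      brd_coef (w ! n) False * summand X xs + brd_coef (w ! n) True * loop_val ^ k * summand Y xs"
    if "length xs = n" for xs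
  proof -
    have state: "tl_state w (xs @ [b]) n = tl_state w xs n" for b
      by (rule tl_state_cong) (use that in \<open>auto simp: nth_append\<close>)
    have prod: "(\<Prod>j<Suc n. brd_coef (w ! j) ((xs @ [b]) ! j)) =
        (\<Prod>j<n. brd_coef (w ! j) (xs ! j)) * brd_coef (w ! n) b" for b
      using that by (simp add: nth_append)
    have last: "(xs @ [b]) ! n = b" for b using that nth_append_length[of xs b] by simp
    have assoc: "snd (tl_mul_gen D (fst (w ! n)))
        + closure_extra_loops (fst (tl_mul_gen D (fst (w ! n)))) X = k + closure_extra_loops D Y" for D
      unfolding k_def Y_def by (rule tl_mul_gen_extra_loops)
    show ?thesis
      unfolding summand'_def summand_def tl_state.simps(2) state prod last
      by (simp add: tl_step_def add.assoc assoc power_add algebra_simps)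
  qed
  have "closed_state_sum w (Suc n) X =
      (\<Sum>xs\<in>{xs. length xs = n}. summand' (xs @ [False]) + summand' (xs @ [True]))"
    unfolding closed_state_sum_def summand'_def by (rule sum_bool_lists_Suc)
  also have "\<dots> = (\<Sum>xs\<in>{xs. length xs = n}.
      brd_coef (w ! n) False * summand X xs + brd_coef (w ! n) True * loop_val ^ k * summand Y xs)"
    by (rule sum.cong) (auto simp: smoothings)
  also have "\<dots> = brd_coef (w ! n) False * closed_state_sum w n X +
      brd_coef (w ! n) True * loop_val ^ k * closed_state_sum w n Y"
    unfolding closed_state_sum_def summand_def by (simp add: sum.distrib sum_distrib_left)
  finally show ?thesis unfolding k_def Y_def .
qed

lemma closed_state_sum_cong:
  "(\<And>j. j < n \<Longrightarrow> w ! j = w' ! j) \<Longrightarrow> closed_state_sum w n X = closed_state_sum w' n X"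
  unfolding closed_state_sum_def
  by (intro sum.cong refl arg_cong2[where f = "(*)"] prod.cong arg_cong2[where f = "(^)"])
     (simp_all add: tl_state_cong[of n _ _ w w'])

lemma alpha_nth: "j < n \<Longrightarrow> alpha n ! j = (if even j then X1 else X2, True)"
  by (simp add: alpha_def)

definition alt_state_sum :: "nat \<Rightarrow> tl3 \<Rightarrow> int fls" where
  "alt_state_sum n X = closed_state_sum (alpha n) n X"

text \<open>The recursion of the state sum along alpha, with s and its inverse i kept abstract so
  that it can be solved in any integral domain.\<close>

definition alt_step :: "brd_gen \<Rightarrow> (tl3 \<Rightarrow> 'a::comm_ring_1) \<Rightarrow> 'a \<Rightarrow> 'a \<Rightarrow> tl3 \<Rightarrow> 'a" where
  "alt_step g F s i X =
     - s * F X - s^2 * (- (s + i)) ^ snd (tl_gen_mul g X) * F (fst (tl_gen_mul g X))"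

lemma alt_state_sum_Suc:
  "alt_state_sum (Suc n) X = alt_step (if even n then X1 else X2) (alt_state_sum n) fls_X fls_X_inv X"
proof -
  have "closed_state_sum (alpha (Suc n)) n Y = alt_state_sum n Y" for Y
    unfolding alt_state_sum_def by (rule closed_state_sum_cong) (simp add: alpha_nth)
  then show ?thesis
    unfolding alt_state_sum_def closed_state_sum_Suc alt_step_def
    by (simp add: alpha_nth brd_coef_def loop_val_def)
qed

lemma V_Delta_alt_state_sum: "V_Delta n = alt_state_sum n TL_1"
  unfolding V_Delta_def V3_closed_state_sum alt_state_sum_def by (simp add: alpha_def)

section \<open>The alternating braids\<close>

text \<open>Closed forms of the state sums along alpha: for n = 6 j + r, with A = s^(6 j), the state
  sum closed by X is alt_closed r X s (s^(-1)) A.\<close>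

definition alt_closed :: "nat \<Rightarrow> tl3 \<Rightarrow> 'a::comm_ring_1 \<Rightarrow> 'a \<Rightarrow> 'a \<Rightarrow> 'a" where
  "alt_closed r X s i A = (case X of
     TL_1 \<Rightarrow> [A*(i^2+s^2) + 2*A^2, -A*(i+s^3) + A^2*(s^3-s), A*(1+s^4) - A^2*s^4,
            -A*(s+s^5), A*(s^2+s^6) - A^2*s^8, -A*(s^3+s^7) + A^2*(s^9-s^11)] ! r
   | TL_e1 \<Rightarrow> [A^2*(-i-s), A^2*(-(s^2)-s^4), A^2*s^3, A^2*s^6, A^2*s^9, A^2*s^12] ! r
   | TL_e2 \<Rightarrow> [A^2*(-i-s), A^2, A^2*s^3, A^2*s^6, A^2*s^9, -(A^2)*(s^8+s^10)] ! r
   | TL_e1e2 \<Rightarrow> [A^2, A^2*s^3, A^2*(-(s^2)-s^4), -(A^2)*(s^5+s^7), A^2*s^6, A^2*s^9] ! r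
   | TL_e2e1 \<Rightarrow> [A^2, A^2*s^3, A^2*s^6, -(A^2)*(s^5+s^7), -(A^2)*(s^8+s^10), A^2*s^9] ! r)"

lemma alt_closed_Suc:
  fixes s i A :: "'a::idom"
  assumes "s * i = 1" and "r < 5"
  shows "alt_closed (Suc r) X s i A =
    alt_step (if even r then X1 else X2) (\<lambda>Y. alt_closed r Y s i A) s i X"
proof -
  \<comment> \<open>stated for a bound r, which hypsubst can eliminate\<close>
  have "\<And>r. r = 0 \<or> r = 1 \<or> r = 2 \<or> r = 3 \<or> r = 4 \<Longrightarrow> alt_closed (Suc r) X s i A =
      alt_step (if even r then X1 else X2) (\<lambda>Y. alt_closed r Y s i A) s i X"
    using assms(1)
    by (elim disjE; hypsubst; simp; induct X; simp add: alt_closed_def alt_step_def tl_gen_mul_def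
        numeral_eq_Suc; (simp add: algebra_simps; fail)?; algebra)
  moreover have "r = 0 \<or> r = 1 \<or> r = 2 \<or> r = 3 \<or> r = 4" using assms(2) by linarith
  ultimately show ?thesis by blast
qed

lemma alt_closed_wrap:
  fixes s i A :: "'a::idom"
  assumes "s * i = 1"
  shows "alt_closed 0 X s i (A * s^6) = alt_step X2 (\<lambda>Y. alt_closed 5 Y s i A) s i X"
  using assms
  by (induct X; simp add: alt_closed_def alt_step_def tl_gen_mul_def numeral_eq_Suc;
      (simp add: algebra_simps; fail)?; algebra)

lemma fls_X_times_X_inv: "fls_X * (fls_X_inv :: int fls) = 1"
  by (simp add: fls_X_inv_times_conv_shift fls_X_conv_shift_1)

lemma alt_state_sum_closed:
  "alt_state_sum n X = alt_closed (n mod 6) X fls_X fls_X_inv (fls_X ^ (6 * (n div 6)))"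
proof (induction n arbitrary: X)
  case 0
  have "{st :: bool list. length st = 0} = {[]}" by auto
  then have "alt_state_sum 0 X = loop_val ^ closure_extra_loops TL_1 X"
    by (simp add: alt_state_sum_def closed_state_sum_def)
  also have "\<dots> = alt_closed 0 X fls_X fls_X_inv 1"
    using fls_X_times_X_inv
    by (induct X) (simp_all add: closure_extra_loops_def alt_closed_def loop_val_def, algebra)
  finally show ?case by simp
next
  case (Suc n)
  let ?A = "(fls_X :: int fls) ^ (6 * (n div 6))"
  have IH: "alt_state_sum n = (\<lambda>Y. alt_closed (n mod 6) Y fls_X fls_X_inv ?A)"
    using Suc.IH by blast
  have parity: "even (n mod 6) \<longleftrightarrow> even n" by (simp add: dvd_mod_iff)
  have step: "alt_state_sum (Suc n) X =
      alt_step (if even (n mod 6) then X1 else X2) (\<lambda>Y. alt_closed (n mod 6) Y fls_X fls_X_inv ?A)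
        fls_X fls_X_inv X"
    unfolding alt_state_sum_Suc IH parity ..
  show ?case
  proof (cases "n mod 6 = 5")
    case True
    then have "Suc n mod 6 = 0" "Suc n div 6 = Suc (n div 6)" by (simp_all add: mod_Suc div_Suc)
    then show ?thesis
      using step alt_closed_wrap[OF fls_X_times_X_inv, of X ?A] True
      by (simp add: power_add mult.commute)
  next
    case False
    then have "Suc n mod 6 = Suc (n mod 6)" "Suc n div 6 = n div 6" by (simp_all add: mod_Suc div_Suc)
    moreover have "n mod 6 < 5" using False by linarith
    ultimately show ?thesis
      using step alt_closed_Suc[OF fls_X_times_X_inv] by simp
  qed
qed

lemma V_Delta_closed:
  "V_Delta n = alt_closed (n mod 6) TL_1 fls_X fls_X_inv (fls_X ^ (6 * (n div 6)))"
  unfolding V_Delta_alt_state_sum alt_state_sum_closed ..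

lemma alt_closed_recurrences:
  fixes s i A :: "'a::idom"
  assumes "s * i = 1"
  defines "V \<equiv> \<lambda>r. alt_closed r TL_1 s i A" and "V' \<equiv> \<lambda>r. alt_closed r TL_1 s i (A * s^6)"
  shows "V 3 = (s^3 - s) * V 2 + s^4 * V 1"
    and "V 5 = (s^3 - s) * V 4 + s^4 * V 3"
    and "V' 1 = (s^3 - s) * V' 0 + s^4 * V 5"
    and "V 4 = (s^3 - s) * V 3 + s^4 * V 2"
    and "V' 2 = (s^3 - s) * V' 1 + (s^7 - s^5) * V 5 + s^8 * V 4"
    and "V' 0 = (s^3 - s) * (V 5 + s^4 * V 3 + s^8 * V 1) + s^12 * V 0"
  using assms(1) unfolding V_def V'_def alt_closed_def
  by (simp add: numeral_eq_Suc; (simp add: algebra_simps; fail)?; algebra)+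

lemma V_Delta_at:
  "n = 6 * j + r \<Longrightarrow> r < 6 \<Longrightarrow> V_Delta n = alt_closed r TL_1 fls_X fls_X_inv (fls_X ^ (6 * j))"
  by (simp add: V_Delta_closed)

lemma fls_X_power_next_block: "(fls_X :: int fls) ^ (6 * Suc j) = fls_X ^ (6 * j) * fls_X ^ 6"
  by (simp add: power_add mult.commute)

lemma V_Delta_rec_odd:
  assumes "k \<ge> 1"
  shows "V_Delta (2*k+1) = (fls_X ^ 3 - fls_X) * V_Delta (2*k) + fls_X ^ 4 * V_Delta (2*k-1)"
proof -
  define j where "j = (k - 1) div 3"
  note rec = alt_closed_recurrences[OF fls_X_times_X_inv, of "fls_X ^ (6 * j)"]
  have "k = 3*j + 1 \<or> k = 3*j + 2 \<or> k = 3*j + 3" using assms unfolding j_def by presburger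
  then show ?thesis
  proof (elim disjE)
    assume "k = 3*j + 1"
    then show ?thesis
      using V_Delta_at[of "2*k-1" j 1] V_Delta_at[of "2*k" j 2] V_Delta_at[of "2*k+1" j 3] rec(1)
      by simp
  next
    assume "k = 3*j + 2"
    then show ?thesis
      using V_Delta_at[of "2*k-1" j 3] V_Delta_at[of "2*k" j 4] V_Delta_at[of "2*k+1" j 5] rec(2)
      by simp
  next
    assume "k = 3*j + 3"
    then show ?thesis
      using V_Delta_at[of "2*k-1" j 5] V_Delta_at[of "2*k" "Suc j" 0] V_Delta_at[of "2*k+1" "Suc j" 1]
        rec(3) fls_X_power_next_block[of j]
      by simp
  qed
qed

lemma V_Delta_rec_6k4:
  "V_Delta (6*k+4) = (fls_X ^ 3 - fls_X) * V_Delta (6*k+3) + fls_X ^ 4 * V_Delta (6*k+2)"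
  using V_Delta_at[of "6*k+2" k 2] V_Delta_at[of "6*k+3" k 3] V_Delta_at[of "6*k+4" k 4]
    alt_closed_recurrences(4)[OF fls_X_times_X_inv, of "fls_X ^ (6 * k)"]
  by simp

lemma V_Delta_rec_6k2:
  assumes "k \<ge> 1"
  shows "V_Delta (6*k+2) = (fls_X ^ 3 - fls_X) * V_Delta (6*k+1)
    + (fls_X ^ 7 - fls_X ^ 5) * V_Delta (6*k-1) + fls_X ^ 8 * V_Delta (6*k-2)"
proof -
  obtain j where "k = Suc j" using assms by (cases k) auto
  then show ?thesis
    using V_Delta_at[of "6*k-2" j 4] V_Delta_at[of "6*k-1" j 5]
      V_Delta_at[of "6*k+1" k 1] V_Delta_at[of "6*k+2" k 2]
      alt_closed_recurrences(5)[OF fls_X_times_X_inv, of "fls_X ^ (6 * j)"] fls_X_power_next_block[of j]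
    by simp
qed

lemma V_Delta_rec_6k:
  assumes "k \<ge> 1"
  shows "V_Delta (6*k) = (fls_X ^ 3 - fls_X) *
      (V_Delta (6*k-1) + fls_X ^ 4 * V_Delta (6*k-3) + fls_X ^ 8 * V_Delta (6*k-5))
    + fls_X ^ 12 * V_Delta (6*k-6)"
proof -
  obtain j where "k = Suc j" using assms by (cases k) auto
  then show ?thesis
    using V_Delta_at[of "6*k-6" j 0] V_Delta_at[of "6*k-5" j 1] V_Delta_at[of "6*k-3" j 3]
      V_Delta_at[of "6*k-1" j 5] V_Delta_at[of "6*k" k 0]
      alt_closed_recurrences(6)[OF fls_X_times_X_inv, of "fls_X ^ (6 * j)"] fls_X_power_next_block[of j]
    by simp
qed

theorem proposition4p6:
  shows "(\<forall>k::nat. k \<ge> 1 \<longrightarrow>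
            V_Delta (2*k+1) = (fls_X ^ 3 - fls_X) * V_Delta (2*k) + fls_X ^ 4 * V_Delta (2*k-1))
       \<and> (\<forall>k::nat.
            V_Delta (6*k+4) = (fls_X ^ 3 - fls_X) * V_Delta (6*k+3) + fls_X ^ 4 * V_Delta (6*k+2))
       \<and> (\<forall>k::nat. k \<ge> 1 \<longrightarrow>
            V_Delta (6*k+2) = (fls_X ^ 3 - fls_X) * V_Delta (6*k+1)
              + (fls_X ^ 7 - fls_X ^ 5) * V_Delta (6*k-1) + fls_X ^ 8 * V_Delta (6*k-2))
       \<and> (\<forall>k::nat. k \<ge> 1 \<longrightarrow>
            V_Delta (6*k) = (fls_X ^ 3 - fls_X) *
              (V_Delta (6*k-1) + fls_X ^ 4 * V_Delta (6*k-3) + fls_X ^ 8 * V_Delta (6*k-5))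
              + fls_X ^ 12 * V_Delta (6*k-6))"
  using V_Delta_rec_odd V_Delta_rec_6k4 V_Delta_rec_6k2 V_Delta_rec_6k by blast

end
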